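(* For any two words $w$ and $v$ such that $v$ is a rearrangement (permutation of the letters) of $w$, the words $w$ and $v$ are cyclic Knuth equivalent.
   Context: A word is a finite sequence of letters from a totally ordered alphabet. A transformation of type $K'$ replaces three consecutive letters $yzx$ of a word with $x<y\le z$ by $yxz$. A transformation of type $K''$ replaces three consecutive letters $xzy$ with $x\le y<z$ by $zxy$. An elementary Knuth transformation is a transformation of type $K'$ or $K''$ or the inverse of one of these. The rotation $R$ moves the last letter of a word to the front. An elementary cyclic Knuth transformation is an elementary Knuth transformation or $R$; two words are cyclic Knuth equivalent if one can be obtained from the other by a finite sequence of elementary cyclic Knuth transformations. *)

theory Defs
  imports Main "HOL-Library.Multiset"
begin

definition knuth_K1 :: "'a::linorder list \<Rightarrow> 'a list \<Rightarrow> bool" where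
  "knuth_K1 w w' \<longleftrightarrow> (\<exists>u v x y z. x < y \<and> y \<le> z \<and>
      w = u @ [y, z, x] @ v \<and> w' = u @ [y, x, z] @ v)"

definition knuth_K2 :: "'a::linorder list \<Rightarrow> 'a list \<Rightarrow> bool" where
  "knuth_K2 w w' \<longleftrightarrow> (\<exists>u v x y z. x \<le> y \<and> y < z \<and>
      w = u @ [x, z, y] @ v \<and> w' = u @ [z, x, y] @ v)"

definition elem_knuth :: "'a::linorder list \<Rightarrow> 'a list \<Rightarrow> bool" where
  "elem_knuth w w' \<longleftrightarrow> knuth_K1 w w' \<or> knuth_K2 w w' \<or> knuth_K1 w' w \<or> knuth_K2 w' w"

definition rotR :: "'a list \<Rightarrow> 'a list" where
  "rotR w = (if w = [] then [] else last w # butlast w)"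

definition elem_cyclic_knuth :: "'a::linorder list \<Rightarrow> 'a list \<Rightarrow> bool" where
  "elem_cyclic_knuth w w' \<longleftrightarrow> elem_knuth w w' \<or> w' = rotR w"

definition cyclic_knuth_equiv :: "'a::linorder list \<Rightarrow> 'a list \<Rightarrow> bool" where
  "cyclic_knuth_equiv w v \<longleftrightarrow> elem_cyclic_knuth\<^sup>*\<^sup>* w v"

end

theory Submission
  imports Defs
begin

text \<open>Since rotations preserve the multiset of letters, it suffices to show that every word is
  equivalent to its sorted rearrangement. Sort from the right: let \<open>t @ E\<close> have a sorted
  suffix \<open>E\<close> dominating \<open>t\<close>, and write \<open>t = p @ M # q\<close> with \<open>M\<close> the last occurrence of the
  maximum of \<open>t\<close>. The letters of \<open>q\<close> can be moved one by one to the left of \<open>M\<close>: up to Knuth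
  equivalence \<open>q\<close> either starts with an ascent \<open>a \<le> b\<close>, and then \<open>M a b\<close> becomes \<open>a M b\<close> by K'';
  or it ends with a descent \<open>a > b\<close>, and then \<open>b\<close> slides through \<open>E\<close> by inverse K' moves and
  is rotated to the front. When \<open>q\<close> is empty, \<open>M\<close> joins the sorted suffix.\<close>

definition knuth_equiv :: "'a::linorder list \<Rightarrow> 'a list \<Rightarrow> bool" where
  "knuth_equiv = elem_knuth\<^sup>*\<^sup>*"

lemma elem_knuth_sym: "elem_knuth w w' \<Longrightarrow> elem_knuth w' w"
  unfolding elem_knuth_def by blast

lemma elem_knuth_mset: "elem_knuth w w' \<Longrightarrow> mset w = mset w'"
  unfolding elem_knuth_def knuth_K1_def knuth_K2_def by (auto simp: add_mset_commute)

lemma elem_knuth_append_context: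
  assumes "elem_knuth w w'"
  shows "elem_knuth (u @ w @ v) (u @ w' @ v)"
proof -
  have K1: "knuth_K1 (u @ a @ v) (u @ b @ v)" if "knuth_K1 a b" for a b :: "'a list"
    using that unfolding knuth_K1_def by (metis append.assoc)
  have K2: "knuth_K2 (u @ a @ v) (u @ b @ v)" if "knuth_K2 a b" for a b :: "'a list"
    using that unfolding knuth_K2_def by (metis append.assoc)
  show ?thesis
    using assms K1 K2 unfolding elem_knuth_def by blast
qed

lemma knuth_equiv_refl: "knuth_equiv w w"
  by (simp add: knuth_equiv_def)

lemma knuth_equiv_trans [trans]: "knuth_equiv u v \<Longrightarrow> knuth_equiv v w \<Longrightarrow> knuth_equiv u w"
  unfolding knuth_equiv_def by (rule rtranclp_trans)

lemma knuth_equiv_sym: "knuth_equiv w w' \<Longrightarrow> knuth_equiv w' w"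
  unfolding knuth_equiv_def
  by (induction rule: rtranclp_induct)
     (auto intro: converse_rtranclp_into_rtranclp elem_knuth_sym)

lemma knuth_equiv_append_context:
  "knuth_equiv w w' \<Longrightarrow> knuth_equiv (u @ w @ v) (u @ w' @ v)"
  unfolding knuth_equiv_def
  by (induction rule: rtranclp_induct)
     (auto intro: rtranclp.rtrancl_into_rtrancl elem_knuth_append_context)

lemma knuth_equiv_K1:
  "x < y \<Longrightarrow> y \<le> z \<Longrightarrow> knuth_equiv (u @ [y, z, x] @ v) (u @ [y, x, z] @ v)"
  unfolding knuth_equiv_def elem_knuth_def knuth_K1_def by (intro r_into_rtranclp) blast

lemma knuth_equiv_K2:
  "x \<le> y \<Longrightarrow> y < z \<Longrightarrow> knuth_equiv (u @ [x, z, y] @ v) (u @ [z, x, y] @ v)"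
  unfolding knuth_equiv_def elem_knuth_def knuth_K2_def by (intro r_into_rtranclp) blast

lemma cyclic_knuth_equiv_refl: "cyclic_knuth_equiv w w"
  by (simp add: cyclic_knuth_equiv_def)

lemma cyclic_knuth_equiv_trans [trans]:
  "cyclic_knuth_equiv u v \<Longrightarrow> cyclic_knuth_equiv v w \<Longrightarrow> cyclic_knuth_equiv u w"
  unfolding cyclic_knuth_equiv_def by (rule rtranclp_trans)

lemma cyclic_knuth_equiv_if_knuth_equiv: "knuth_equiv w w' \<Longrightarrow> cyclic_knuth_equiv w w'"
  unfolding knuth_equiv_def cyclic_knuth_equiv_def
  by (erule rtranclp_mono[THEN predicate2D, rotated]) (auto simp: elem_cyclic_knuth_def)

lemma cyclic_knuth_equiv_rotate: "cyclic_knuth_equiv (xs @ [x]) (x # xs)"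
  unfolding cyclic_knuth_equiv_def
  by (rule r_into_rtranclp) (simp add: elem_cyclic_knuth_def rotR_def)

lemma cyclic_knuth_equiv_append_commute: "cyclic_knuth_equiv (u @ v) (v @ u)"
proof (induction v arbitrary: u rule: rev_induct)
  case Nil
  show ?case by (simp add: cyclic_knuth_equiv_refl)
next
  case (snoc x v)
  have "cyclic_knuth_equiv (u @ v @ [x]) (x # u @ v)"
    using cyclic_knuth_equiv_rotate[of "u @ v" x] by simp
  also have "cyclic_knuth_equiv (x # u @ v) (v @ x # u)"
    using snoc.IH[of "x # u"] by simp
  finally show ?case
    by simp
qed

lemma elem_cyclic_knuth_mset: "elem_cyclic_knuth w w' \<Longrightarrow> mset w = mset w'"
  unfolding elem_cyclic_knuth_def rotR_def
  by (cases w rule: rev_cases) (auto dest: elem_knuth_mset)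

lemma cyclic_knuth_equiv_mset: "cyclic_knuth_equiv w w' \<Longrightarrow> mset w = mset w'"
  unfolding cyclic_knuth_equiv_def
  by (induction rule: rtranclp_induct) (auto dest: elem_cyclic_knuth_mset)

lemma elem_cyclic_knuth_reverse: "elem_cyclic_knuth w w' \<Longrightarrow> cyclic_knuth_equiv w' w"
proof (cases w rule: rev_cases)
  case (snoc u x)
  assume "elem_cyclic_knuth w w'"
  then consider "elem_knuth w w'" | "w' = x # u"
    using snoc by (auto simp: elem_cyclic_knuth_def rotR_def)
  then show ?thesis
  proof cases
    case 1
    then show ?thesis
      unfolding cyclic_knuth_equiv_def
      by (intro r_into_rtranclp) (simp add: elem_cyclic_knuth_def elem_knuth_sym)
  next
    case 2
    then show ?thesis
      using snoc cyclic_knuth_equiv_append_commute[of "[x]" u] by simp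
  qed
qed (auto simp: elem_cyclic_knuth_def rotR_def elem_knuth_def knuth_K1_def knuth_K2_def
    cyclic_knuth_equiv_refl)

lemma cyclic_knuth_equiv_sym: "cyclic_knuth_equiv w w' \<Longrightarrow> cyclic_knuth_equiv w' w"
  unfolding cyclic_knuth_equiv_def
proof (induction rule: rtranclp_induct)
  case (step v w')
  then show ?case
    using elem_cyclic_knuth_reverse[OF step.hyps(2)]
    unfolding cyclic_knuth_equiv_def by (auto intro: rtranclp_trans)
qed simp

lemma knuth_equiv_pass_sorted:
  assumes "sorted E" "x < y" "\<forall>e\<in>set E. y \<le> e"
  shows "knuth_equiv (y # x # E) (y # E @ [x])"
  using assms
proof (induction E arbitrary: y)
  case Nil
  show ?case by (simp add: knuth_equiv_refl)
next
  case (Cons e E)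
  have "knuth_equiv (y # x # e # E) (y # e # x # E)"
    using knuth_equiv_sym[OF knuth_equiv_K1[of x y e "[]" E]] Cons.prems by simp
  also have "knuth_equiv (y # e # x # E) (y # e # E @ [x])"
    using knuth_equiv_append_context[OF Cons.IH, of e "[y]" "[]"] Cons.prems
    by (simp add: order.strict_trans2)
  finally show ?case by simp
qed

lemma cyclic_knuth_equiv_descent_to_front:
  assumes "sorted E" "x < y" "\<forall>e\<in>set E. y \<le> e"
  shows "cyclic_knuth_equiv (u @ y # x # E) (x # u @ y # E)"
proof -
  have "knuth_equiv (u @ (y # x # E) @ []) (u @ (y # E @ [x]) @ [])"
    using assms by (rule knuth_equiv_append_context[OF knuth_equiv_pass_sorted])
  then have "cyclic_knuth_equiv (u @ y # x # E) ((u @ y # E) @ [x])"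
    by (simp add: cyclic_knuth_equiv_if_knuth_equiv)
  then show ?thesis
    using cyclic_knuth_equiv_rotate cyclic_knuth_equiv_trans by blast
qed

lemma knuth_equiv_ascent_or_descent:
  assumes "2 \<le> length q"
  shows "\<exists>q'. knuth_equiv q q' \<and>
    ((\<exists>a b r. q' = a # b # r \<and> a \<le> b) \<or> (\<exists>r a b. q' = r @ [a, b] \<and> b < a))"
  using assms
proof (induction q)
  case (Cons a r)
  show ?case
  proof (cases "length r = 1")
    case True
    then obtain b where "r = [b]"
      by (cases r) auto
    then show ?thesis
      by (intro exI[of _ "a # r"]) (auto simp: knuth_equiv_refl intro!: exI[of _ "[]"])
  next
    case False
    then obtain r' where r': "knuth_equiv r r'"
      and r'_shape: "(\<exists>c d t. r' = c # d # t \<and> c \<le> d) \<or> (\<exists>t c d. r' = t @ [c, d] \<and> d < c)"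
      using Cons by auto
    have ar': "knuth_equiv (a # r) (a # r')"
      using knuth_equiv_append_context[OF r', of "[a]" "[]"] by simp
    from r'_shape show ?thesis
    proof (elim disjE exE conjE)
      fix t c d
      assume "r' = t @ [c, d]" "d < c"
      then show ?thesis
        using ar' by (intro exI[of _ "a # r'"]) (auto intro!: exI[of _ "a # t"])
    next
      fix c d t
      assume r'_def: "r' = c # d # t" and "c \<le> d"
      consider "a \<le> c" | "c < a" "a \<le> d" | "d < a"
        using \<open>c \<le> d\<close> by fastforce
      then show ?thesis
      proof cases
        case 1
        then show ?thesis
          using ar' r'_def by (intro exI[of _ "a # r'"]) simp
      next
        case 2
        then have "knuth_equiv (a # r') (a # d # c # t)"
          using knuth_equiv_sym[OF knuth_equiv_K1[of c a d "[]" t]] r'_def by simp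
        then have "knuth_equiv (a # r) (a # d # c # t)"
          by (rule knuth_equiv_trans[OF ar'])
        then show ?thesis
          using 2 by (intro exI[of _ "a # d # c # t"]) simp
      next
        case 3
        then have "knuth_equiv (a # r') (c # a # d # t)"
          using knuth_equiv_sym[OF knuth_equiv_K2[of c d a "[]" t]] \<open>c \<le> d\<close> r'_def by simp
        then have "knuth_equiv (a # r) (c # a # d # t)"
          by (rule knuth_equiv_trans[OF ar'])
        moreover have "c \<le> a"
          using 3 \<open>c \<le> d\<close> by simp
        ultimately show ?thesis
          by (intro exI[of _ "c # a # d # t"]) simp
      qed
    qed
  qed
qed simp

lemma cyclic_knuth_equiv_shift_below_max:
  assumes "sorted E" "\<forall>e\<in>set E. M \<le> e" "\<forall>x\<in>set q. x < M"
  shows "\<exists>p'. cyclic_knuth_equiv (p @ M # q @ E) (p' @ M # E)"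
  using assms(3)
proof (induction "length q" arbitrary: p q rule: less_induct)
  case less
  consider "q = []" | x where "q = [x]" | "2 \<le> length q"
    by (cases q) (auto simp: Suc_le_eq)
  then show ?case
  proof cases
    case 1
    then show ?thesis
      using cyclic_knuth_equiv_refl by auto
  next
    case (2 x)
    then have "cyclic_knuth_equiv (p @ M # q @ E) ((x # p) @ M # E)"
      using cyclic_knuth_equiv_descent_to_front[OF assms(1) _ assms(2)] less.prems by simp
    then show ?thesis ..
  next
    case 3
    from knuth_equiv_ascent_or_descent[OF this] obtain q' where "knuth_equiv q q'"
      and q'_shape: "(\<exists>a b r. q' = a # b # r \<and> a \<le> b) \<or> (\<exists>r a b. q' = r @ [a, b] \<and> b < a)"
      by blast
    then have q_q': "cyclic_knuth_equiv (p @ M # q @ E) (p @ M # q' @ E)"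
      using cyclic_knuth_equiv_if_knuth_equiv knuth_equiv_append_context[of q q' "p @ [M]" E]
      by simp
    then have "mset q' = mset q"
      by (auto dest: cyclic_knuth_equiv_mset)
    then have q'_len: "length q' = length q" and "set q' = set q"
      by (metis size_mset, metis set_mset_mset)
    then have q'_below: "\<forall>x\<in>set q'. x < M"
      using less.prems by simp
    from q'_shape show ?thesis
    proof (elim disjE exE conjE)
      fix a b r
      assume q': "q' = a # b # r" and "a \<le> b"
      have "b < M"
        using q' q'_below by simp
      have "cyclic_knuth_equiv (p @ M # q @ E) (p @ [M, a, b] @ r @ E)"
        using q_q' q' by simp
      also have "cyclic_knuth_equiv (p @ [M, a, b] @ r @ E) (p @ [a, M, b] @ r @ E)"
        using knuth_equiv_sym[OF knuth_equiv_K2[OF \<open>a \<le> b\<close> \<open>b < M\<close>]]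
        by (rule cyclic_knuth_equiv_if_knuth_equiv)
      finally have "cyclic_knuth_equiv (p @ M # q @ E) ((p @ [a]) @ M # (b # r) @ E)"
        using q' by simp
      moreover obtain p' where "cyclic_knuth_equiv ((p @ [a]) @ M # (b # r) @ E) (p' @ M # E)"
        using less.hyps[of "b # r" "p @ [a]"] q' q'_len q'_below by auto
      ultimately show ?thesis
        using cyclic_knuth_equiv_trans by blast
    next
      fix r a b
      assume q': "q' = r @ [a, b]" and "b < a"
      have "a < M"
        using q' q'_below by simp
      then have "\<forall>e\<in>set E. a \<le> e"
        using assms(2) by (meson less_le_trans less_imp_le)
      have "cyclic_knuth_equiv (p @ M # q @ E) ((p @ M # r) @ a # b # E)"
        using q_q' q' by simp
      also have "cyclic_knuth_equiv ((p @ M # r) @ a # b # E) (b # (p @ M # r) @ a # E)"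
        using cyclic_knuth_equiv_descent_to_front[OF assms(1) \<open>b < a\<close>] \<open>\<forall>e\<in>set E. a \<le> e\<close> .
      finally have "cyclic_knuth_equiv (p @ M # q @ E) ((b # p) @ M # (r @ [a]) @ E)"
        using q' by simp
      moreover obtain p' where "cyclic_knuth_equiv ((b # p) @ M # (r @ [a]) @ E) (p' @ M # E)"
        using less.hyps[of "r @ [a]" "b # p"] q' q'_len q'_below by auto
      ultimately show ?thesis
        using cyclic_knuth_equiv_trans by blast
    qed
  qed
qed

lemma cyclic_knuth_equiv_sorted_prefix:
  assumes "sorted E" "\<forall>x\<in>set t. \<forall>e\<in>set E. x \<le> e"
  shows "\<exists>s. sorted s \<and> cyclic_knuth_equiv (t @ E) (s @ E)"
  using assms
proof (induction "length t" arbitrary: t E rule: less_induct)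
  case less
  show ?case
  proof (cases "t = []")
    case True
    then show ?thesis
      by (intro exI[of _ "[]"]) (simp add: cyclic_knuth_equiv_refl)
  next
    case False
    define M where "M = Max (set t)"
    have "M \<in> set t" and M_max: "\<forall>x\<in>set t. x \<le> M"
      using False by (simp_all add: M_def)
    then obtain p q where t: "t = p @ M # q" and "M \<notin> set q"
      using split_list_last by metis
    then have "\<forall>x\<in>set q. x < M"
      using M_max by (auto simp: le_less)
    then obtain p' where t_p': "cyclic_knuth_equiv (t @ E) (p' @ M # E)"
      using cyclic_knuth_equiv_shift_below_max less.prems \<open>M \<in> set t\<close> t by fastforce
    then have mset_p': "mset p' = mset p + mset q"
      using t by (auto dest: cyclic_knuth_equiv_mset)
    have "set p' \<subseteq> set t"
      using arg_cong[OF mset_p', of set_mset] t by auto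
    have "length p' < length t"
      using arg_cong[OF mset_p', of size] t by simp
    moreover have "sorted (M # E)"
      using less.prems \<open>M \<in> set t\<close> by simp
    moreover have p'_below: "\<forall>x\<in>set p'. \<forall>e\<in>set (M # E). x \<le> e"
      using \<open>set p' \<subseteq> set t\<close> M_max less.prems(2) by auto
    ultimately obtain s where "sorted s" and p'_s: "cyclic_knuth_equiv (p' @ M # E) (s @ M # E)"
      using less.hyps by blast
    then have "mset s = mset p'"
      by (auto dest: cyclic_knuth_equiv_mset)
    then have "sorted (s @ [M])"
      using \<open>sorted s\<close> p'_below by (simp add: sorted_append flip: set_mset_mset)
    moreover have "cyclic_knuth_equiv (t @ E) ((s @ [M]) @ E)"
      using cyclic_knuth_equiv_trans[OF t_p' p'_s] by simp
    ultimately show ?thesis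
      by blast
  qed
qed

lemma cyclic_knuth_equiv_sort: "cyclic_knuth_equiv w (sort w)"
proof -
  obtain s where "sorted s" and "cyclic_knuth_equiv w s"
    using cyclic_knuth_equiv_sorted_prefix[of "[]" w] by auto
  moreover from this have "sort w = s"
    by (intro properties_for_sort) (auto dest: cyclic_knuth_equiv_mset)
  ultimately show ?thesis
    by simp
qed

theorem mainTheorem11:
  fixes w v :: "'a::linorder list"
  assumes "mset v = mset w"
  shows "cyclic_knuth_equiv w v"
proof -
  have "sort v = sort w"
    using assms by (intro properties_for_sort) simp_all
  then have "cyclic_knuth_equiv (sort w) v"
    using cyclic_knuth_equiv_sym[OF cyclic_knuth_equiv_sort[of v]] by simp
  then show ?thesis
    using cyclic_knuth_equiv_sort cyclic_knuth_equiv_trans by blast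
qed

end
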